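(* For $|q|<1$, with sums over $i,j,k\in\mathbb{Z}_{\ge0}$, \begin{align*} \sum \frac{q^{\frac{3}{2}i^2+j^2+\frac{1}{2}k^2+2ij+ik+jk}}{(q;q)_i(q;q)_j(q;q)_k}&=\frac{(-q^{\frac{1}{2}};q)_\infty}{(q,q^4;q^5)_\infty}, \\ \sum \frac{q^{\frac{3}{2}i^2+j^2+\frac{1}{2}k^2+2ij+ik+jk+\frac{1}{2}i+\frac{1}{2}k}}{(q;q)_i(q;q)_j(q;q)_k}&=\frac{(-q;q)_\infty}{(q,q^4;q^5)_\infty}, \\ \sum\frac{q^{\frac{3}{2}i^2+j^2+\frac{1}{2}k^2+2ij+ik+jk-\frac{1}{2}i-\frac{1}{2}k}}{(q;q)_i(q;q)_j(q;q)_k}&=2\frac{(-q;q)_\infty}{(q,q^4;q^5)_\infty}, \\ \sum\frac{q^{\frac{3}{2}i^2+j^2+\frac{1}{2}k^2+2ij+ik+jk+i+j}}{(q;q)_i(q;q)_j(q;q)_k}&=\frac{(-q^{\frac{1}{2}};q)_\infty}{(q^2,q^3;q^5)_\infty}, \\ \sum\frac{q^{\frac{3}{2}i^2+j^2+\frac{1}{2}k^2+2ij+ik+jk+\frac{3}{2}i+j+\frac{1}{2}k}}{(q;q)_i(q;q)_j(q;q)_k}&=\frac{(-q;q)_\infty}{(q^2,q^3;q^5)_\infty}, \\ \sum\frac{q^{\frac{3}{2}i^2+j^2+\frac{1}{2}k^2+2ij+ik+jk+\frac{1}{2}i+j-\frac{1}{2}k}}{(q;q)_i(q;q)_j(q;q)_k}&=2\frac{(-q;q)_\infty}{(q^2,q^3;q^5)_\infty}.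 \end{align*}
   Context: For $|q|<1$: $(a;q)_n=\prod_{k=0}^{n-1}(1-aq^k)$ ($(a;q)_0=1$), $(a;q)_\infty=\prod_{k\ge0}(1-aq^k)$, $(a_1,\dots,a_m;q)_\infty=\prod_\ell(a_\ell;q)_\infty$. Half-integer powers of $q$ are taken with respect to a fixed choice of $q^{1/2}$ (e.g. $0<q<1$). *)

theory Defs
  imports "HOL-Analysis.Analysis"
begin

definition qpoch :: "complex \<Rightarrow> complex \<Rightarrow> nat \<Rightarrow> complex" where
  "qpoch a q n = (\<Prod>k<n. 1 - a * q ^ k)"

definition qpoch_inf :: "complex \<Rightarrow> complex \<Rightarrow> complex" where
  "qpoch_inf a q = (\<Prod>k. 1 - a * q ^ k)"

text \<open>Summand of the triple sums, written in terms of r = q^(1/2):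
  r ^ e / ((q;q)_i (q;q)_j (q;q)_k) with q = r^2.\<close>
definition tsum_term :: "complex \<Rightarrow> (nat \<Rightarrow> nat \<Rightarrow> nat \<Rightarrow> nat) \<Rightarrow> nat \<times> nat \<times> nat \<Rightarrow> complex" where
  "tsum_term r e = (\<lambda>(i,j,k). r ^ e i j k /
      (qpoch (r^2) (r^2) i * qpoch (r^2) (r^2) j * qpoch (r^2) (r^2) k))"

end

theory Submission
  imports Defs
begin

text \<open>Summing first over \<open>k\<close> with Euler's identity and then over \<open>i + j = n\<close> with the
  q-binomial theorem turns each triple sum into \<open>(-q\<^sup>s\<^sup>/\<^sup>2;q)\<^sub>\<infinity>\<close> times a
  Rogers--Ramanujan sum \<open>\<Sum>\<^sub>n q\<^bsup>n(n+A)\<^esup>/(q;q)\<^sub>n\<close> with \<open>A \<in> {0,1}\<close>, \<open>s \<in> {0,1,2}\<close>;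
  for \<open>s = 0\<close> the factor \<open>(-1;q)\<^sub>\<infinity> = 2(-q;q)\<^sub>\<infinity>\<close> produces the 2.
  The Rogers--Ramanujan identities are proved along Andrews' route: two applications of the
  Bailey lemma to the unit Bailey pair give a finite identity whose right-hand side is a truncated
  theta series in base \<open>q\<^sup>5\<close>; letting \<open>n \<rightarrow> \<infinity>\<close> (Tannery's theorem) and evaluating the theta
  series by the Jacobi triple product, itself the limit of its finite form, gives
  \<open>(q\<^bsup>2+2A\<^esup>, q\<^bsup>3-2A\<^esup>, q\<^sup>5; q\<^sup>5)\<^sub>\<infinity> / (q;q)\<^sub>\<infinity>\<close>, and the 5-dissection of \<open>(q;q)\<^sub>\<infinity>\<close>
  finishes.\<close>

section \<open>Finite q-series identities\<close>

definition binom2 :: "int \<Rightarrow> nat" where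
  "binom2 j = nat (j * (j - 1) div 2)"

lemma binom2_int: "int (binom2 j) = j * (j - 1) div 2"
proof -
  have "j * (j - 1) \<ge> 0"
    by (cases "j \<ge> 1") (auto simp: mult_nonneg_nonneg mult_nonpos_nonpos)
  thus ?thesis unfolding binom2_def by simp
qed

lemma binom2_diff_one: "int (binom2 j) = int (binom2 (j - 1)) + j - 1"
proof -
  have "j * (j - 1) = (j - 1) * (j - 1 - 1) + 2 * (j - 1)" by algebra
  thus ?thesis unfolding binom2_int by simp
qed

lemma binom2_Suc: "binom2 (int (Suc k)) = binom2 (int k) + k"
  using binom2_diff_one[of "int (Suc k)"] by simp

lemma binom2_uminus: "binom2 (- int k) = binom2 (int k) + k"
proof -
  have "int (binom2 (- int k)) = int (binom2 (int k)) + int k"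
    unfolding binom2_int by (simp add: algebra_simps)
  thus ?thesis by simp
qed

lemma two_binom2: "k * k = 2 * binom2 (int k) + k"
proof -
  have "even (int k * (int k - 1))" by simp
  hence "2 * int (binom2 (int k)) = int k * (int k - 1)" by (simp add: binom2_int)
  hence "int (2 * binom2 (int k) + k) = int (k * k)" by (simp add: algebra_simps)
  thus ?thesis by linarith
qed

lemma qpoch_0 [simp]: "qpoch a q 0 = 1"
  by (simp add: qpoch_def)

lemma qpoch_Suc: "qpoch a q (Suc n) = qpoch a q n * (1 - a * q ^ n)"
  by (simp add: qpoch_def)

lemma qpoch_Suc_shift: "qpoch a q (Suc n) = (1 - a) * qpoch (a * q) q n"
  unfolding qpoch_def prod.lessThan_Suc_shift by (simp add: mult_ac)

lemma one_minus_power_nonzero: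
  fixes q :: complex
  assumes "norm q < 1" and "n > 0"
  shows "1 - q ^ n \<noteq> 0"
proof
  assume "1 - q ^ n = 0"
  hence "norm q ^ n = 1" by (metis norm_one norm_power right_minus_eq)
  moreover have "norm q ^ n < 1" using assms by (simp add: power_less_one_iff)
  ultimately show False by simp
qed

lemma qpoch_qq_nonzero: "norm q < 1 \<Longrightarrow> qpoch q q n \<noteq> 0"
  unfolding qpoch_def using one_minus_power_nonzero[of q] by (simp flip: power_Suc)

text \<open>The value \<open>0\<close> at negative arguments makes factors \<open>qpoch_recip q (n - j)\<close> truncate
  sums over \<open>j\<close> at \<open>n\<close> automatically.\<close>

definition qpoch_recip :: "complex \<Rightarrow> int \<Rightarrow> complex" where
  "qpoch_recip q m = (if m < 0 then 0 else 1 / qpoch q q (nat m))"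

lemma qpoch_recip_neg [simp]: "m < 0 \<Longrightarrow> qpoch_recip q m = 0"
  by (simp add: qpoch_recip_def)

lemma qpoch_recip_of_nat: "qpoch_recip q (int n) = 1 / qpoch q q n"
  by (simp add: qpoch_recip_def)

lemma qpoch_recip_0 [simp]: "qpoch_recip q 0 = 1"
  by (simp add: qpoch_recip_def)

lemma qpoch_recip_nonzero: "norm q < 1 \<Longrightarrow> m \<ge> 0 \<Longrightarrow> qpoch_recip q m \<noteq> 0"
  using qpoch_qq_nonzero by (simp add: qpoch_recip_def)

lemma qpoch_recip_Suc:
  assumes "norm q < 1"
  shows "(1 - q ^ Suc n) * qpoch_recip q (int (Suc n)) = qpoch_recip q (int n)"
  using qpoch_qq_nonzero[OF assms, of n] qpoch_qq_nonzero[OF assms, of "Suc n"]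
  by (simp only: qpoch_recip_of_nat qpoch_Suc) (simp add: field_simps)

lemma qpoch_recip_pascal:
  assumes q: "norm q < 1"
  shows "(1 - q ^ Suc M) * qpoch_recip q (int i) * qpoch_recip q (int (Suc M) - int i)
       = q ^ i * qpoch_recip q (int i) * qpoch_recip q (int M - int i)
         + qpoch_recip q (int i - 1) * qpoch_recip q (int (Suc M) - int i)"
proof -
  consider "i = 0" | "i = Suc M" | "Suc M < i" | "0 < i" "i < Suc M" by linarith
  thus ?thesis
  proof cases
    case 1
    thus ?thesis using qpoch_recip_Suc[OF q, of M] by simp
  next
    case 2
    hence "int (Suc M) - int i = 0" "int M - int i = -1" "int i - 1 = int M" by auto
    thus ?thesis using qpoch_recip_Suc[OF q, of M] 2 by (simp add: mult.commute)
  next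
    case 3
    thus ?thesis by simp
  next
    case 4
    define a b where "a = i - 1" and "b = M - i"
    have ab: "i = Suc a" "M = a + b + 1" using 4 unfolding a_def b_def by auto
    have e: "int (Suc M) - int (Suc a) = int (Suc b)" "int M - int (Suc a) = int b" "int (Suc a) - 1 = int a"
      using ab by auto
    have "1 - q ^ Suc M = q ^ Suc a * (1 - q ^ Suc b) + (1 - q ^ Suc a)"
      using ab by (simp add: algebra_simps power_add)
    have "(1 - q ^ Suc M) * qpoch_recip q (int (Suc a)) * qpoch_recip q (int (Suc b))
        = q ^ Suc a * qpoch_recip q (int (Suc a)) * ((1 - q ^ Suc b) * qpoch_recip q (int (Suc b)))
          + ((1 - q ^ Suc a) * qpoch_recip q (int (Suc a))) * qpoch_recip q (int (Suc b))"
      by (simp only: \<open>1 - q ^ Suc M = _\<close>) (simp add: algebra_simps)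
    also have "\<dots> = q ^ Suc a * qpoch_recip q (int (Suc a)) * qpoch_recip q (int b)
        + qpoch_recip q (int a) * qpoch_recip q (int (Suc b))"
      by (simp only: qpoch_recip_Suc[OF q])
    finally show ?thesis unfolding ab(1) e .
  qed
qed

lemma qpoch_recip_pascal_scaled:
  assumes "norm q < 1"
  shows "(1 - q ^ Suc M) * (c * qpoch_recip q (int i) * qpoch_recip q (int (Suc M) - int i))
       = c * (q ^ i * qpoch_recip q (int i) * qpoch_recip q (int M - int i))
         + c * (qpoch_recip q (int i - 1) * qpoch_recip q (int (Suc M) - int i))"
  unfolding distrib_left[symmetric] qpoch_recip_pascal[OF assms, symmetric] by (simp only: mult_ac)

lemma qpoch_recip_pascal_reflected:
  assumes q: "norm q < 1" and m: "m \<le> Suc N"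
  shows "(1 - q ^ Suc N) * qpoch_recip q (int (Suc N) - int m) * qpoch_recip q (int m)
       = qpoch_recip q (int N - int m) * qpoch_recip q (int m)
         + q ^ (Suc N - m) * qpoch_recip q (int (Suc N) - int m) * qpoch_recip q (int m - 1)"
proof -
  define i where "i = Suc N - m"
  have e: "int i = int (Suc N) - int m" "int (Suc N) - int i = int m" "int N - int i = int m - 1"
      "int i - 1 = int N - int m" using m unfolding i_def by auto
  show ?thesis
    using qpoch_recip_pascal[OF q, of N i] unfolding e i_def[symmetric] by (simp add: mult_ac)
qed

lemma qbinomial:
  assumes q: "norm q < 1"
  shows "(\<Sum>i\<le>n. q ^ binom2 (int i) * z ^ i * qpoch_recip q (int i) * qpoch_recip q (int n - int i))
       = qpoch (- z) q n * qpoch_recip q (int n)"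
proof (induction n arbitrary: z)
  case 0
  show ?case by (simp add: binom2_def)
next
  case (Suc n)
  let ?S = "\<lambda>z n. \<Sum>i\<le>n. q ^ binom2 (int i) * z ^ i * qpoch_recip q (int i) * qpoch_recip q (int n - int i)"
  have "(1 - q ^ Suc n) * ?S z (Suc n)
      = (\<Sum>i\<le>Suc n. q ^ binom2 (int i) * z ^ i * (q ^ i * qpoch_recip q (int i) * qpoch_recip q (int n - int i)))
      + (\<Sum>i\<le>Suc n. q ^ binom2 (int i) * z ^ i * (qpoch_recip q (int i - 1) * qpoch_recip q (int (Suc n) - int i)))"
    unfolding sum_distrib_left sum.distrib[symmetric]
    by (rule sum.cong[OF refl]) (rule qpoch_recip_pascal_scaled[OF q])
  also have "(\<Sum>i\<le>Suc n. q ^ binom2 (int i) * z ^ i * (q ^ i * qpoch_recip q (int i) * qpoch_recip q (int n - int i)))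
      = ?S (z * q) n"
    by (simp add: sum.atMost_Suc power_mult_distrib algebra_simps)
  also have "(\<Sum>i\<le>Suc n. q ^ binom2 (int i) * z ^ i * (qpoch_recip q (int i - 1) * qpoch_recip q (int (Suc n) - int i)))
      = z * ?S (z * q) n"
    unfolding sum.atMost_Suc_shift sum_distrib_left binom2_Suc
    by (simp add: power_add power_mult_distrib algebra_simps)
  also have "?S (z * q) n + z * ?S (z * q) n = (1 + z) * qpoch (- (z * q)) q n * qpoch_recip q (int n)"
    using Suc.IH[of "z * q"] by (simp add: algebra_simps)
  also have "\<dots> = (1 - q ^ Suc n) * (qpoch (- z) q (Suc n) * qpoch_recip q (int (Suc n)))"
    unfolding qpoch_Suc_shift qpoch_recip_Suc[OF q, of n, symmetric] by (simp add: algebra_simps)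
  finally show ?case using one_minus_power_nonzero[OF q, of "Suc n"] by simp
qed

text \<open>By the q-binomial theorem this equals \<open>q\<^bsup>c(c-1)/2\<^esup> (x q\<^bsup>1-c\<^esup>; q)\<^sub>M / (q;q)\<^sub>M\<close>;
  the normalisation keeps all powers of \<open>q\<close> nonnegative.\<close>

definition qbinom_alt :: "complex \<Rightarrow> complex \<Rightarrow> nat \<Rightarrow> int \<Rightarrow> complex" where
  "qbinom_alt q x M c =
     (\<Sum>i\<le>M. (-1) ^ i * q ^ binom2 (c - int i) * x ^ i * qpoch_recip q (int i) * qpoch_recip q (int M - int i))"

lemma qbinom_alt_rec:
  assumes q: "norm q < 1" and c: "c \<ge> 1"
  shows "(1 - q ^ Suc M) * qbinom_alt q x (Suc M) c = (q ^ nat (c - 1) - x) * qbinom_alt q x M (c - 1)"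
proof -
  have shift: "q ^ binom2 (c - int i) * q ^ i = q ^ nat (c - 1) * q ^ binom2 (c - 1 - int i)" for i
  proof -
    have "binom2 (c - int i) + i = nat (c - 1) + binom2 (c - 1 - int i)"
      using binom2_diff_one[of "c - int i"] c by (simp add: algebra_simps)
    thus ?thesis by (metis power_add)
  qed
  have "(1 - q ^ Suc M) * qbinom_alt q x (Suc M) c
      = (\<Sum>i\<le>Suc M. (-1) ^ i * q ^ binom2 (c - int i) * x ^ i
           * (q ^ i * qpoch_recip q (int i) * qpoch_recip q (int M - int i)))
      + (\<Sum>i\<le>Suc M. (-1) ^ i * q ^ binom2 (c - int i) * x ^ i
           * (qpoch_recip q (int i - 1) * qpoch_recip q (int (Suc M) - int i)))"
    unfolding qbinom_alt_def sum_distrib_left sum.distrib[symmetric]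
    by (rule sum.cong[OF refl]) (rule qpoch_recip_pascal_scaled[OF q])
  also have "(\<Sum>i\<le>Suc M. (-1) ^ i * q ^ binom2 (c - int i) * x ^ i
           * (q ^ i * qpoch_recip q (int i) * qpoch_recip q (int M - int i)))
      = q ^ nat (c - 1) * qbinom_alt q x M (c - 1)"
    unfolding qbinom_alt_def sum_distrib_left
  proof (simp add: sum.atMost_Suc, rule sum.cong[OF refl])
    fix i
    have "(-1) ^ i * q ^ binom2 (c - int i) * x ^ i * (q ^ i * qpoch_recip q (int i) * qpoch_recip q (int M - int i))
        = (-1) ^ i * x ^ i * qpoch_recip q (int i) * qpoch_recip q (int M - int i) * (q ^ binom2 (c - int i) * q ^ i)"
      by (simp only: mult_ac)
    also have "\<dots> = q ^ nat (c - 1) * ((-1) ^ i * q ^ binom2 (c - 1 - int i) * x ^ i * qpoch_recip q (int i)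
        * qpoch_recip q (int M - int i))"
      unfolding shift by (simp only: mult_ac)
    finally show "(-1) ^ i * q ^ binom2 (c - int i) * x ^ i * (q ^ i * qpoch_recip q (int i) * qpoch_recip q (int M - int i))
        = q ^ nat (c - 1) * ((-1) ^ i * q ^ binom2 (c - 1 - int i) * x ^ i * qpoch_recip q (int i)
        * qpoch_recip q (int M - int i))" .
  qed
  also have "(\<Sum>i\<le>Suc M. (-1) ^ i * q ^ binom2 (c - int i) * x ^ i
           * (qpoch_recip q (int i - 1) * qpoch_recip q (int (Suc M) - int i)))
      = - x * qbinom_alt q x M (c - 1)"
    unfolding qbinom_alt_def sum.atMost_Suc_shift sum_distrib_left by (simp add: algebra_simps)
  finally show ?thesis by (simp add: algebra_simps)
qed

lemma qbinom_alt_iter: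
  assumes q: "norm q < 1"
  shows "int k \<le> c \<Longrightarrow> qpoch_recip q (int M) * qbinom_alt q x (M + k) c
     = qpoch_recip q (int (M + k)) * (\<Prod>t<k. q ^ nat (c - 1 - int t) - x) * qbinom_alt q x M (c - int k)"
proof (induction k arbitrary: c)
  case 0
  then show ?case by simp
next
  case (Suc k)
  have c: "c \<ge> 1" using Suc.prems by simp
  have "(1 - q ^ Suc (M + k)) * (qpoch_recip q (int M) * qbinom_alt q x (M + Suc k) c)
      = (q ^ nat (c - 1) - x) * (qpoch_recip q (int M) * qbinom_alt q x (M + k) (c - 1))"
    using qbinom_alt_rec[OF q c, of "M + k" x] by (simp add: mult_ac)
  also have "\<dots> = (q ^ nat (c - 1) - x) * (qpoch_recip q (int (M + k))
      * (\<Prod>t<k. q ^ nat (c - 1 - 1 - int t) - x) * qbinom_alt q x M (c - 1 - int k))"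
    using Suc.IH[of "c - 1"] Suc.prems by simp
  also have "\<dots> = (1 - q ^ Suc (M + k)) * (qpoch_recip q (int (M + Suc k))
      * (\<Prod>t<Suc k. q ^ nat (c - 1 - int t) - x) * qbinom_alt q x M (c - int (Suc k)))"
  proof -
    have "(\<Prod>t<Suc k. q ^ nat (c - 1 - int t) - x)
        = (q ^ nat (c - 1) - x) * (\<Prod>t<k. q ^ nat (c - 1 - 1 - int t) - x)"
      unfolding prod.lessThan_Suc_shift by (simp add: algebra_simps)
    moreover have "qpoch_recip q (int (M + k)) = (1 - q ^ Suc (M + k)) * qpoch_recip q (int (M + Suc k))"
      using qpoch_recip_Suc[OF q, of "M + k"] by simp
    moreover have "c - int (Suc k) = c - 1 - int k" by simp
    ultimately show ?thesis by (simp only: mult_ac)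
  qed
  finally show ?case using one_minus_power_nonzero[OF q, of "Suc (M + k)"] by simp
qed

lemma qbinom_alt_0:
  assumes q: "norm q < 1"
  shows "qbinom_alt q x n 0 = qpoch (x * q) q n * qpoch_recip q (int n)"
proof -
  have "qbinom_alt q x n 0
      = (\<Sum>i\<le>n. q ^ binom2 (int i) * (- (x * q)) ^ i * qpoch_recip q (int i) * qpoch_recip q (int n - int i))"
    unfolding qbinom_alt_def power_minus[where a = "x * q"]
    by (rule sum.cong[OF refl]) (simp add: binom2_uminus power_add power_mult_distrib mult_ac)
  thus ?thesis using qbinomial[OF q, where z = "- (x * q)" and n = n] by simp
qed

lemma qbinom_alt_one_eq_0:
  assumes q: "norm q < 1"
  shows "1 \<le> c \<Longrightarrow> c \<le> int M \<Longrightarrow> qbinom_alt q 1 M c = 0"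
proof (induction M arbitrary: c)
  case 0
  then show ?case by simp
next
  case (Suc M)
  have "(1 - q ^ Suc M) * qbinom_alt q 1 (Suc M) c = (q ^ nat (c - 1) - 1) * qbinom_alt q 1 M (c - 1)"
    using qbinom_alt_rec[OF q] Suc.prems by simp
  also have "\<dots> = 0"
    using Suc.IH[of "c - 1"] Suc.prems by (cases "c = 1") simp_all
  finally show ?case using one_minus_power_nonzero[OF q, of "Suc M"] by simp
qed

lemma qbinom_alt_double:
  assumes q: "norm q < 1" and xu: "x * u = 1" and xq: "x * q = v"
  shows "(-u) ^ n * qbinom_alt q x (n + n) (int n) = qpoch_recip q (int (n + n)) * qpoch u q n * qpoch v q n"
proof -
  have prod: "(-u) ^ n * (\<Prod>t<n. q ^ nat (int n - 1 - int t) - x) = qpoch u q n"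
  proof -
    have "(-u) ^ n * (\<Prod>t<n. q ^ nat (int n - 1 - int t) - x) = (\<Prod>t<n. (-u) * (q ^ nat (int n - 1 - int t) - x))"
      by (simp only: prod.distrib prod_constant card_lessThan)
    also have "\<dots> = (\<Prod>t<n. 1 - u * q ^ (n - Suc t))"
    proof (rule prod.cong[OF refl])
      fix t assume "t \<in> {..<n}"
      hence "nat (int n - 1 - int t) = n - Suc t" by auto
      thus "(-u) * (q ^ nat (int n - 1 - int t) - x) = 1 - u * q ^ (n - Suc t)"
        using xu by (simp add: algebra_simps)
    qed
    also have "\<dots> = qpoch u q n"
      unfolding qpoch_def by (rule prod.nat_diff_reindex)
    finally show ?thesis .
  qed
  have "qpoch_recip q (int n) * qbinom_alt q x (n + n) (int n)
      = qpoch_recip q (int (n + n)) * (\<Prod>t<n. q ^ nat (int n - 1 - int t) - x) * qbinom_alt q x n 0"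
    using qbinom_alt_iter[OF q, of n "int n" n x] by simp
  hence "qbinom_alt q x (n + n) (int n)
      = qpoch_recip q (int (n + n)) * (\<Prod>t<n. q ^ nat (int n - 1 - int t) - x) * qpoch v q n"
    using qbinom_alt_0[OF q, of x n] qpoch_recip_nonzero[OF q, of "int n"] xq by simp
  thus ?thesis unfolding prod[symmetric] by (simp only: mult_ac)
qed

lemma qbinom_alt_double_lower_half:
  assumes xu: "x * u = 1"
  shows "(-u) ^ n * (\<Sum>i\<le>n. (-1) ^ i * q ^ binom2 (int n - int i) * x ^ i
           * qpoch_recip q (int i) * qpoch_recip q (int (n + n) - int i))
       = (\<Sum>k\<le>n. (-1) ^ k * q ^ binom2 (int k) * u ^ k * qpoch_recip q (int n - int k) * qpoch_recip q (int n + int k))"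
  unfolding sum_distrib_left
proof (rule sum.reindex_bij_witness[where i="\<lambda>k. n - k" and j="\<lambda>i. n - i"])
  fix i assume "i \<in> {..n}"
  then obtain k where k: "n = i + k" using le_Suc_ex by auto
  have "(-u) ^ n * ((-1) ^ i * x ^ i) = (-1) ^ k * u ^ k * ((-1) ^ i * (-1) ^ i) * (x * u) ^ i"
    unfolding k power_minus[of u] by (simp add: power_add power_mult_distrib mult_ac)
  also have "\<dots> = (-1) ^ k * u ^ k"
    by (simp add: xu flip: power_add)
  finally have E: "(-u) ^ n * ((-1) ^ i * x ^ i) = (-1) ^ k * u ^ k" .
  have e: "int n - int i = int k" "int (n + n) - int i = int n + int k" "int n - int k = int i"
    using k by auto
  have "(-1) ^ k * q ^ binom2 (int k) * u ^ k * qpoch_recip q (int n - int k) * qpoch_recip q (int n + int k)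
      = ((-u) ^ n * ((-1) ^ i * x ^ i))
        * (q ^ binom2 (int n - int i) * qpoch_recip q (int i) * qpoch_recip q (int (n + n) - int i))"
    unfolding E by (simp only: e mult_ac)
  also have "\<dots> = (-u) ^ n * ((-1) ^ i * q ^ binom2 (int n - int i) * x ^ i * qpoch_recip q (int i)
        * qpoch_recip q (int (n + n) - int i))"
    by (simp only: mult_ac)
  finally show "(-1) ^ (n - i) * q ^ binom2 (int (n - i)) * u ^ (n - i) * qpoch_recip q (int n - int (n - i))
      * qpoch_recip q (int n + int (n - i))
      = (-u) ^ n * ((-1) ^ i * q ^ binom2 (int n - int i) * x ^ i * qpoch_recip q (int i)
        * qpoch_recip q (int (n + n) - int i))"
    using k by simp
qed auto

lemma qbinom_alt_double_upper_half:
  assumes xu: "x * u = 1" and xq: "x * q = v"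
  shows "(-u) ^ n * (\<Sum>i\<in>{n..n + n}. (-1) ^ i * q ^ binom2 (int n - int i) * x ^ i
           * qpoch_recip q (int i) * qpoch_recip q (int (n + n) - int i))
       = (\<Sum>k\<le>n. (-1) ^ k * q ^ binom2 (int k) * v ^ k * qpoch_recip q (int n - int k) * qpoch_recip q (int n + int k))"
  unfolding sum_distrib_left
proof (rule sum.reindex_bij_witness[where i="\<lambda>k. n + k" and j="\<lambda>i. i - n"])
  fix i assume "i \<in> {n..n + n}"
  then obtain k where k: "i = n + k" "k \<le> n" using le_Suc_ex by force
  have "binom2 (int n - int i) = binom2 (int k) + k"
    using binom2_uminus[of k] k(1) by simp
  hence "(-u) ^ n * ((-1) ^ i * q ^ binom2 (int n - int i) * x ^ i)
      = ((-1) ^ n * (-1) ^ n) * (u * x) ^ n * ((-1) ^ k * q ^ binom2 (int k) * (x * q) ^ k)"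
    unfolding k(1) power_minus[of u] by (simp add: power_add power_mult_distrib mult_ac)
  also have "\<dots> = (-1) ^ k * q ^ binom2 (int k) * v ^ k"
    using xu xq by (simp add: mult.commute[of u x] flip: power_add)
  finally have E: "(-u) ^ n * ((-1) ^ i * q ^ binom2 (int n - int i) * x ^ i) = (-1) ^ k * q ^ binom2 (int k) * v ^ k" .
  have e: "int i = int n + int k" "int (n + n) - (int n + int k) = int n - int k"
    using k by auto
  have "(-1) ^ k * q ^ binom2 (int k) * v ^ k * qpoch_recip q (int n - int k) * qpoch_recip q (int n + int k)
      = ((-u) ^ n * ((-1) ^ i * q ^ binom2 (int n - int i) * x ^ i))
        * (qpoch_recip q (int i) * qpoch_recip q (int (n + n) - int i))"
    unfolding E by (simp only: e mult_ac)
  also have "\<dots> = (-u) ^ n * ((-1) ^ i * q ^ binom2 (int n - int i) * x ^ i * qpoch_recip q (int i)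
        * qpoch_recip q (int (n + n) - int i))"
    by (simp only: mult_ac)
  finally show "(-1) ^ (i - n) * q ^ binom2 (int (i - n)) * v ^ (i - n) * qpoch_recip q (int n - int (i - n))
      * qpoch_recip q (int n + int (i - n))
      = (-u) ^ n * ((-1) ^ i * q ^ binom2 (int n - int i) * x ^ i * qpoch_recip q (int i)
        * qpoch_recip q (int (n + n) - int i))"
    using k by simp
qed auto

lemma finite_jacobi_triple_product:
  assumes q: "norm q < 1" and u: "u \<noteq> 0" and uv: "u * v = q"
  shows "(\<Sum>k\<le>n. (-1) ^ k * q ^ binom2 (int k) * u ^ k * qpoch_recip q (int n - int k) * qpoch_recip q (int n + int k))
       + (\<Sum>k\<le>n. (-1) ^ k * q ^ binom2 (int k) * v ^ k * qpoch_recip q (int n - int k) * qpoch_recip q (int n + int k))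
       - qpoch_recip q (int n) * qpoch_recip q (int n)
       = qpoch_recip q (int (n + n)) * qpoch u q n * qpoch v q n"
proof -
  define x where "x = 1 / u"
  have xu: "x * u = 1" using u by (simp add: x_def)
  have xq: "x * q = v" using uv u by (simp add: x_def field_simps)
  define g where "g i = (-1) ^ i * q ^ binom2 (int n - int i) * x ^ i
    * qpoch_recip q (int i) * qpoch_recip q (int (n + n) - int i)" for i
  have "(\<Sum>i\<le>n + n. g i) + g n = (\<Sum>i\<le>n. g i) + (\<Sum>i\<in>{n..n + n}. g i)"
  proof -
    have "{..n} \<union> {n..n + n} = {..n + n}" "{..n} \<inter> {n..n + n} = {n}" by auto
    thus ?thesis using sum.union_inter[of "{..n}" "{n..n + n}" g] by simp
  qed
  hence "qbinom_alt q x (n + n) (int n) = (\<Sum>i\<le>n. g i) + (\<Sum>i\<in>{n..n + n}. g i) - g n"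
    unfolding qbinom_alt_def g_def[symmetric] by (simp add: eq_diff_eq)
  hence "(-u) ^ n * qbinom_alt q x (n + n) (int n)
      = (-u) ^ n * (\<Sum>i\<le>n. g i) + (-u) ^ n * (\<Sum>i\<in>{n..n + n}. g i) - (-u) ^ n * g n"
    by (simp only: distrib_left right_diff_distrib)
  moreover have "(-u) ^ n * g n = qpoch_recip q (int n) * qpoch_recip q (int n)"
    using xu by (simp add: g_def binom2_def power_mult_distrib[symmetric] mult_ac flip: power_minus)
  ultimately show ?thesis
    unfolding g_def qbinom_alt_double[OF q xu xq] qbinom_alt_double_lower_half[OF xu]
      qbinom_alt_double_upper_half[OF xu xq]
    by simp
qed

section \<open>Infinite products and limits\<close>

lemma convergent_prod_qpoch:
  fixes a q :: complex
  assumes q: "norm q < 1"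
  shows "convergent_prod (\<lambda>k. 1 - a * q ^ k)"
proof -
  have "(\<lambda>k. norm ((1 - a * q ^ k) - 1)) = (\<lambda>k. norm a * norm q ^ k)"
    by (simp add: norm_mult norm_power)
  moreover have "summable (\<lambda>k. norm a * norm q ^ k)"
    using q by (intro summable_mult summable_geometric) simp
  ultimately show ?thesis
    by (intro abs_convergent_prod_imp_convergent_prod summable_imp_abs_convergent_prod) simp
qed

lemma qpoch_tendsto: "norm q < 1 \<Longrightarrow> (\<lambda>n. qpoch a q n) \<longlonglongrightarrow> qpoch_inf a q"
proof -
  assume q: "norm q < 1"
  have "(\<lambda>n. qpoch a q (Suc n)) \<longlonglongrightarrow> qpoch_inf a q"
    unfolding qpoch_def qpoch_inf_def lessThan_Suc_atMost
    by (rule convergent_prod_LIMSEQ[OF convergent_prod_qpoch[OF q]])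
  thus ?thesis by (rule LIMSEQ_imp_Suc)
qed

lemma qpoch_inf_nonzero:
  assumes q: "norm q < 1" and a: "norm a < 1"
  shows "qpoch_inf a q \<noteq> 0"
  unfolding qpoch_inf_def
proof (rule prodinf_nonzero[OF convergent_prod_qpoch[OF q]])
  fix k
  have "norm (a * q ^ k) \<le> norm a"
    using q by (simp add: norm_mult norm_power mult_left_le power_le_one)
  thus "1 - a * q ^ k \<noteq> 0" using a by auto
qed

lemma qpoch_inf_Suc_shift:
  assumes q: "norm q < 1"
  shows "qpoch_inf a q = (1 - a) * qpoch_inf (a * q) q"
proof -
  have "(\<lambda>n. qpoch a q (Suc n)) \<longlonglongrightarrow> (1 - a) * qpoch_inf (a * q) q"
    unfolding qpoch_Suc_shift by (intro tendsto_mult tendsto_const qpoch_tendsto[OF q])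
  thus ?thesis using LIMSEQ_Suc[OF qpoch_tendsto[OF q]] LIMSEQ_unique by blast
qed

lemma qpoch_inf_split:
  assumes q: "norm q < 1"
  shows "qpoch_inf a q = qpoch a q n * qpoch_inf (a * q ^ n) q"
proof (induction n arbitrary: a)
  case (Suc n)
  show ?case
    using qpoch_inf_Suc_shift[OF q, of a] Suc.IH[of "a * q"] by (simp add: qpoch_Suc_shift mult_ac)
qed simp

lemma qpoch_add: "qpoch a q (n + k) = qpoch a q n * qpoch (a * q ^ n) q k"
  by (induction k) (simp_all add: qpoch_Suc power_add mult_ac)

lemma qpoch_dissection: "qpoch a q (m * n) = (\<Prod>r<m. qpoch (a * q ^ r) (q ^ m) n)"
proof (induction n)
  case (Suc n)
  have "qpoch a q (m * Suc n) = qpoch a q (m * n) * qpoch (a * q ^ (m * n)) q m"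
    by (metis qpoch_add mult_Suc_right add.commute)
  also have "qpoch (a * q ^ (m * n)) q m = (\<Prod>r<m. 1 - a * q ^ r * (q ^ m) ^ n)"
    unfolding qpoch_def by (simp add: power_mult mult_ac)
  finally show ?case unfolding Suc.IH by (simp add: qpoch_Suc prod.distrib)
qed simp

lemma qpoch_inf_dissection:
  assumes q: "norm q < 1" and m: "m > 0"
  shows "qpoch_inf a q = (\<Prod>r<m. qpoch_inf (a * q ^ r) (q ^ m))"
proof -
  have qm: "norm (q ^ m) < 1"
    using q m by (simp add: norm_power power_less_one_iff)
  have "(\<lambda>n. qpoch a q (m * n)) \<longlonglongrightarrow> qpoch_inf a q"
    using LIMSEQ_subseq_LIMSEQ[OF qpoch_tendsto[OF q], of "\<lambda>n. m * n"] m
    by (simp add: strict_mono_def o_def)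
  moreover have "(\<lambda>n. qpoch a q (m * n)) \<longlonglongrightarrow> (\<Prod>r<m. qpoch_inf (a * q ^ r) (q ^ m))"
    unfolding qpoch_dissection by (intro tendsto_prod qpoch_tendsto[OF qm])
  ultimately show ?thesis using LIMSEQ_unique by blast
qed

lemma qpoch_recip_tendsto:
  assumes q: "norm q < 1"
  shows "(\<lambda>n. qpoch_recip q (int n + c)) \<longlonglongrightarrow> 1 / qpoch_inf q q"
proof -
  have lim: "(\<lambda>n. qpoch_recip q (int n)) \<longlonglongrightarrow> 1 / qpoch_inf q q"
    unfolding qpoch_recip_of_nat
    by (intro tendsto_divide tendsto_const qpoch_tendsto[OF q] qpoch_inf_nonzero[OF q q])
  show ?thesis
  proof (cases "c \<ge> 0")
    case True
    then obtain d where "c = int d" by (metis nonneg_eq_int)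
    thus ?thesis using LIMSEQ_ignore_initial_segment[OF lim, of d] by (simp add: add.commute)
  next
    case False
    define d where "d = nat (- c)"
    hence "c = - int d" using False by simp
    hence "(\<lambda>n. qpoch_recip q (int (n + d) + c)) \<longlonglongrightarrow> 1 / qpoch_inf q q"
      using lim by simp
    thus ?thesis by (rule LIMSEQ_offset)
  qed
qed

lemma qpoch_recip_bounded:
  assumes q: "norm q < 1"
  obtains K where "\<And>m. norm (qpoch_recip q m) \<le> K"
proof -
  have "Bseq (\<lambda>n. qpoch_recip q (int n + 0))"
    using convergent_imp_Bseq[OF convergentI[OF qpoch_recip_tendsto[OF q]]] .
  then obtain K where K: "\<And>n. norm (qpoch_recip q (int n)) \<le> K"
    unfolding Bseq_def by auto
  have "norm (qpoch_recip q m) \<le> K" for m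
    using K[of "nat m"] K[of 0] by (cases "m < 0") auto
  thus ?thesis by (rule that)
qed

lemma tendsto_suminf_mult_bounded:
  fixes f :: "nat \<Rightarrow> 'a :: {real_normed_algebra, banach}"
  assumes f: "summable (\<lambda>k. norm (f k))"
    and g: "\<And>n k. norm (g n k) \<le> K" and lim: "\<And>k. (\<lambda>n. g n k) \<longlonglongrightarrow> L"
  shows "(\<lambda>n. \<Sum>k. f k * g n k) \<longlonglongrightarrow> (\<Sum>k. f k) * L"
proof -
  have "norm (f k * g n k) \<le> norm (f k) * K" for k n
    by (rule order.trans[OF norm_mult_ineq mult_left_mono[OF g norm_ge_zero]])
  hence bound: "eventually (\<lambda>(k, n). norm (f k * g n k) \<le> norm (f k) * K) (at_top \<times>\<^sub>F sequentially)"
    by (intro always_eventually) auto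
  have "(\<lambda>n. f k * g n k) \<longlonglongrightarrow> f k * L" for k
    using lim by (rule tendsto_mult_left)
  from tannerys_theorem[OF this bound summable_mult2[OF f] sequentially_bot]
  have "(\<lambda>n. \<Sum>k. f k * g n k) \<longlonglongrightarrow> (\<Sum>k. f k * L)" by blast
  thus ?thesis using suminf_mult2[OF summable_norm_cancel[OF f]] by simp
qed

lemma has_sum_of_qpoch_recip_convolution:
  assumes q: "norm q < 1" and f: "summable (\<lambda>k. norm (f k))"
    and lim: "(\<lambda>n. \<Sum>k. f k * qpoch_recip q (int n - int k)) \<longlonglongrightarrow> S / qpoch_inf q q"
  shows "(f has_sum S) UNIV"
proof -
  define L where "L = 1 / qpoch_inf q q"
  have L: "L \<noteq> 0" using qpoch_inf_nonzero[OF q q] by (simp add: L_def)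
  obtain K where K: "\<And>m. norm (qpoch_recip q m) \<le> K" using qpoch_recip_bounded[OF q] by blast
  have "(\<lambda>n. qpoch_recip q (int n - int k)) \<longlonglongrightarrow> L" for k
    using qpoch_recip_tendsto[OF q, of "- int k"] by (simp add: L_def)
  from tendsto_suminf_mult_bounded[where g = "\<lambda>n k. qpoch_recip q (int n - int k)", OF f K this]
  have "(\<lambda>n. \<Sum>k. f k * qpoch_recip q (int n - int k)) \<longlonglongrightarrow> (\<Sum>k. f k) * L" .
  from LIMSEQ_unique[OF this lim] have "(\<Sum>k. f k) * L = S * L"
    by (simp add: L_def)
  hence "f sums S" using L summable_sums[OF summable_norm_cancel[OF f]] by simp
  thus ?thesis by (rule norm_summable_imp_has_sum[OF f])
qed

lemma summable_norm_binom2_power: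
  fixes q z :: complex
  assumes q: "norm q < 1"
  shows "summable (\<lambda>k. norm (q ^ binom2 (int k) * z ^ k))"
proof -
  have "(\<lambda>k. norm q ^ k * norm z) \<longlonglongrightarrow> 0"
    using q by (intro tendsto_mult_left_zero LIMSEQ_power_zero) auto
  hence "eventually (\<lambda>k. norm q ^ k * norm z < 1 / 2) sequentially"
    by (rule order_tendstoD(2)) simp
  then obtain N where N: "\<And>k. k \<ge> N \<Longrightarrow> norm q ^ k * norm z < 1 / 2"
    unfolding eventually_sequentially by blast
  show ?thesis
  proof (rule summable_ratio_test[of "1 / 2" N])
    fix k assume "k \<ge> N"
    have "norm (norm (q ^ binom2 (int (Suc k)) * z ^ Suc k))
        = (norm q ^ k * norm z) * norm (q ^ binom2 (int k) * z ^ k)"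
      unfolding binom2_Suc by (simp add: norm_mult norm_power power_add mult_ac)
    also have "\<dots> \<le> 1 / 2 * norm (q ^ binom2 (int k) * z ^ k)"
      using N[OF \<open>k \<ge> N\<close>] by (intro mult_right_mono) auto
    finally show "norm (norm (q ^ binom2 (int (Suc k)) * z ^ Suc k)) \<le> 1 / 2 * norm (norm (q ^ binom2 (int k) * z ^ k))"
      by simp
  qed simp
qed

section \<open>Euler's identity and the Jacobi triple product\<close>

lemma euler_has_sum:
  assumes q: "norm q < 1"
  shows "((\<lambda>k. q ^ binom2 (int k) * z ^ k * qpoch_recip q (int k)) has_sum qpoch_inf (- z) q) UNIV"
proof (rule has_sum_of_qpoch_recip_convolution[OF q])
  obtain K where K: "\<And>m. norm (qpoch_recip q m) \<le> K" using qpoch_recip_bounded[OF q] by blast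
  show "summable (\<lambda>k. norm (q ^ binom2 (int k) * z ^ k * qpoch_recip q (int k)))"
  proof (rule summable_comparison_test')
    show "summable (\<lambda>k. norm (q ^ binom2 (int k) * z ^ k) * K)"
      by (intro summable_mult2 summable_norm_binom2_power[OF q])
    show "norm (norm (q ^ binom2 (int k) * z ^ k * qpoch_recip q (int k)))
        \<le> norm (q ^ binom2 (int k) * z ^ k) * K" for k
      using K[of "int k"] by (simp add: norm_mult mult_left_mono)
  qed
  have "(\<Sum>k. q ^ binom2 (int k) * z ^ k * qpoch_recip q (int k) * qpoch_recip q (int n - int k))
      = qpoch (- z) q n * qpoch_recip q (int n)" for n
  proof -
    have "(\<Sum>k. q ^ binom2 (int k) * z ^ k * qpoch_recip q (int k) * qpoch_recip q (int n - int k))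
        = (\<Sum>k\<le>n. q ^ binom2 (int k) * z ^ k * qpoch_recip q (int k) * qpoch_recip q (int n - int k))"
      by (rule suminf_finite) auto
    thus ?thesis using qbinomial[OF q] by simp
  qed
  moreover have "(\<lambda>n. qpoch (- z) q n * qpoch_recip q (int n)) \<longlonglongrightarrow> qpoch_inf (- z) q * (1 / qpoch_inf q q)"
    using qpoch_recip_tendsto[OF q, of 0] by (intro tendsto_mult qpoch_tendsto[OF q]) simp
  ultimately show "(\<lambda>n. \<Sum>k. q ^ binom2 (int k) * z ^ k * qpoch_recip q (int k) * qpoch_recip q (int n - int k))
      \<longlonglongrightarrow> qpoch_inf (- z) q / qpoch_inf q q"
    by simp
qed

lemma qpoch_recip_mult_tendsto:
  assumes "norm q < 1"
  shows "(\<lambda>n. qpoch_recip q (int n + a) * qpoch_recip q (int n + b))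
           \<longlonglongrightarrow> 1 / qpoch_inf q q * (1 / qpoch_inf q q)"
  by (intro tendsto_mult qpoch_recip_tendsto[OF assms])

lemma tendsto_theta_sums:
  fixes p u v :: complex
  assumes p: "norm p < 1"
    and g: "\<And>n k. norm (g n k) \<le> K" and h: "\<And>n k. norm (h n k) \<le> K"
    and g_lim: "\<And>k. (\<lambda>n. g n k) \<longlonglongrightarrow> M" and h_lim: "\<And>k. (\<lambda>n. h n k) \<longlonglongrightarrow> M" and r: "r \<longlonglongrightarrow> M"
  shows "(\<lambda>n. (\<Sum>k. (-1) ^ k * p ^ binom2 (int k) * u ^ k * g n k)
              + (\<Sum>k. (-1) ^ k * p ^ binom2 (int k) * v ^ k * h n k) - r n)
     \<longlonglongrightarrow> ((\<Sum>k. (-1) ^ k * p ^ binom2 (int k) * u ^ k) + (\<Sum>k. (-1) ^ k * p ^ binom2 (int k) * v ^ k) - 1) * M"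
proof -
  have t: "summable (\<lambda>k. norm ((-1) ^ k * p ^ binom2 (int k) * x ^ k))" for x
    using summable_norm_binom2_power[OF p, of x] by (simp add: norm_mult norm_power)
  have "((\<Sum>k. (-1) ^ k * p ^ binom2 (int k) * u ^ k) + (\<Sum>k. (-1) ^ k * p ^ binom2 (int k) * v ^ k) - 1) * M
      = (\<Sum>k. (-1) ^ k * p ^ binom2 (int k) * u ^ k) * M + (\<Sum>k. (-1) ^ k * p ^ binom2 (int k) * v ^ k) * M - M"
    by (simp only: left_diff_distrib distrib_right mult_1_left)
  thus ?thesis
    by (simp only:) (intro tendsto_diff tendsto_add r tendsto_suminf_mult_bounded[OF t g g_lim]
        tendsto_suminf_mult_bounded[OF t h h_lim])
qed

lemma jacobi_triple_product:
  assumes p: "norm p < 1" and u: "u \<noteq> 0" and uv: "u * v = p"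
  shows "(\<Sum>k. (-1) ^ k * p ^ binom2 (int k) * u ^ k) + (\<Sum>k. (-1) ^ k * p ^ binom2 (int k) * v ^ k) - 1
       = qpoch_inf u p * qpoch_inf v p * qpoch_inf p p"
    (is "?S = _")
proof -
  define L where "L = 1 / qpoch_inf p p"
  obtain K where K: "\<And>m. norm (qpoch_recip p m) \<le> K" using qpoch_recip_bounded[OF p] by blast
  define g where "g n k = qpoch_recip p (int n - int k) * qpoch_recip p (int n + int k)" for n k
  have g: "norm (g n k) \<le> K * K" for n k
    unfolding g_def norm_mult by (intro mult_mono K) (use K[of 0] in auto)
  have g_lim: "(\<lambda>n. g n k) \<longlonglongrightarrow> L * L" for k
    using qpoch_recip_mult_tendsto[OF p, of "- int k" "int k"] by (simp add: g_def L_def)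
  have "(\<Sum>k. (-1) ^ k * p ^ binom2 (int k) * u ^ k * g n k) + (\<Sum>k. (-1) ^ k * p ^ binom2 (int k) * v ^ k * g n k)
      - g n 0 = qpoch_recip p (int (n + n)) * qpoch u p n * qpoch v p n" for n
  proof -
    have "(\<Sum>k. (-1) ^ k * p ^ binom2 (int k) * x ^ k * g n k) = (\<Sum>k\<le>n. (-1) ^ k * p ^ binom2 (int k) * x ^ k * g n k)" for x
      by (rule suminf_finite) (auto simp: g_def)
    thus ?thesis using finite_jacobi_triple_product[OF p u uv, of n] by (simp add: g_def mult.assoc)
  qed
  hence "(\<lambda>n. qpoch_recip p (int (n + n)) * qpoch u p n * qpoch v p n) \<longlonglongrightarrow> ?S * (L * L)"
    using tendsto_theta_sums[OF p, where u = u and v = v and g = g and h = g and r = "\<lambda>n. g n 0",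
        OF g g g_lim g_lim g_lim]
    by simp
  moreover have "(\<lambda>n. qpoch_recip p (int (n + n)) * qpoch u p n * qpoch v p n)
      \<longlonglongrightarrow> qpoch_inf u p * qpoch_inf v p * L"
  proof -
    have "(\<lambda>n. qpoch_recip p (int (n + n) + 0)) \<longlonglongrightarrow> L"
      using LIMSEQ_subseq_LIMSEQ[OF qpoch_recip_tendsto[OF p, of 0], of "\<lambda>n. n + n"]
      unfolding L_def by (simp add: strict_mono_def o_def)
    thus ?thesis by (simp add: mult.commute[of _ L] mult.assoc) (intro tendsto_mult qpoch_tendsto[OF p])
  qed
  ultimately have "?S * (L * L) = qpoch_inf u p * qpoch_inf v p * L"
    by (rule LIMSEQ_unique)
  moreover have "L \<noteq> 0" using qpoch_inf_nonzero[OF p p] by (simp add: L_def)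
  ultimately have "?S * L = qpoch_inf u p * qpoch_inf v p"
    by (simp add: mult.assoc[symmetric])
  thus ?thesis using qpoch_inf_nonzero[OF p p] by (simp add: L_def field_simps)
qed

section \<open>Bailey pairs and the Rogers--Ramanujan identities\<close>

text \<open>Bailey pairs relative to \<open>a = q\<^sup>A\<close> in bilateral form: the terms \<open>j < 0\<close> stand for the
  reflections \<open>j \<mapsto> -j - A\<close>, under which the kernel \<open>1 / ((q;q)\<^bsub>n-j\<^esub> (q;q)\<^bsub>n+j+A\<^esub>)\<close>
  is invariant.\<close>

definition bailey_pair :: "complex \<Rightarrow> nat \<Rightarrow> (int \<Rightarrow> complex) \<Rightarrow> (nat \<Rightarrow> complex) \<Rightarrow> bool" where
  "bailey_pair q A \<alpha> \<beta> \<longleftrightarrow> (\<forall>n. \<beta> n =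
     (\<Sum>j\<in>{- int n - int A..int n}. \<alpha> j * qpoch_recip q (int n - j) * qpoch_recip q (int n + j + int A)))"

lemma minus_one_power_nat_abs_diff: "(-1 :: complex) ^ nat \<bar>int a - int b\<bar> = (-1) ^ a * (-1) ^ b"
proof (cases "b \<le> a")
  case True
  then obtain d where "a = b + d" using le_Suc_ex by blast
  thus ?thesis by (simp add: power_add mult_ac)
next
  case False
  then obtain d where "b = a + d" using le_Suc_ex[of a b] by auto
  thus ?thesis by (simp add: power_add mult_ac)
qed

lemma bailey_pair_unit:
  assumes q: "norm q < 1"
  shows "bailey_pair q A (\<lambda>j. (-1) ^ nat \<bar>j\<bar> * q ^ binom2 j) (\<lambda>n. if n = 0 then 1 else 0)"
  unfolding bailey_pair_def
proof
  fix k
  have "(\<Sum>j\<in>{- int k - int A..int k}. (-1) ^ nat \<bar>j\<bar> * q ^ binom2 j * qpoch_recip q (int k - j)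
         * qpoch_recip q (int k + j + int A))
      = (\<Sum>i\<le>k + k + A. (-1) ^ nat \<bar>int k - int i\<bar> * q ^ binom2 (int k - int i)
         * qpoch_recip q (int k - (int k - int i)) * qpoch_recip q (int k + (int k - int i) + int A))"
    by (rule sum.reindex_bij_witness[where i="\<lambda>i. int k - int i" and j="\<lambda>j. nat (int k - j)"]) auto
  also have "\<dots> = (-1) ^ k * qbinom_alt q 1 (k + k + A) (int k)"
    unfolding qbinom_alt_def sum_distrib_left
  proof (rule sum.cong[OF refl])
    fix i
    have e: "int k - (int k - int i) = int i" "int k + (int k - int i) + int A = int (k + k + A) - int i"
      by auto
    show "(-1) ^ nat \<bar>int k - int i\<bar> * q ^ binom2 (int k - int i) * qpoch_recip q (int k - (int k - int i))
         * qpoch_recip q (int k + (int k - int i) + int A)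
        = (-1) ^ k * ((-1) ^ i * q ^ binom2 (int k - int i) * 1 ^ i * qpoch_recip q (int i)
         * qpoch_recip q (int (k + k + A) - int i))"
      unfolding e by (simp add: minus_one_power_nat_abs_diff mult_ac)
  qed
  also have "\<dots> = (if k = 0 then 1 else 0)"
    using qbinom_alt_0[OF q, of 1 A] qbinom_alt_one_eq_0[OF q, of "int k" "k + k + A"]
      qpoch_qq_nonzero[OF q, of A]
    by (simp add: qpoch_recip_of_nat)
  finally show "(if k = 0 then 1 else 0)
      = (\<Sum>j\<in>{- int k - int A..int k}. (-1) ^ nat \<bar>j\<bar> * q ^ binom2 j * qpoch_recip q (int k - j)
         * qpoch_recip q (int k + j + int A))"
    by (rule sym)
qed

lemma q_vandermonde_index_shift:
  "(\<Sum>m\<le>Suc N. q ^ (m * (m + B)) * qpoch_recip q (int m + int B)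
      * (q ^ (Suc N - m) * qpoch_recip q (int (Suc N) - int m) * qpoch_recip q (int m - 1)))
   = q ^ (N + B + 1) * (\<Sum>m\<le>N. q ^ (m * (m + Suc B)) * qpoch_recip q (int N - int m)
      * qpoch_recip q (int m) * qpoch_recip q (int m + int (Suc B)))"
  unfolding sum.atMost_Suc_shift sum_distrib_left
proof (simp only: of_nat_0 diff_0 qpoch_recip_neg[of "-1"] mult_zero_right add_0 neg_less_0_iff_less
      zero_less_one, rule sum.cong[OF refl])
  fix m assume "m \<in> {..N}"
  hence "Suc m * (Suc m + B) + (Suc N - Suc m) = (N + B + 1) + m * (m + Suc B)"
    by (simp add: algebra_simps)
  hence pow: "q ^ (Suc m * (Suc m + B)) * q ^ (Suc N - Suc m) = q ^ (N + B + 1) * q ^ (m * (m + Suc B))"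
    by (metis power_add)
  have e: "int (Suc m) + int B = int m + int (Suc B)" "int (Suc N) - int (Suc m) = int N - int m"
    "int (Suc m) - 1 = int m" by auto
  have "q ^ (Suc m * (Suc m + B)) * qpoch_recip q (int (Suc m) + int B)
      * (q ^ (Suc N - Suc m) * qpoch_recip q (int (Suc N) - int (Suc m)) * qpoch_recip q (int (Suc m) - 1))
    = (q ^ (Suc m * (Suc m + B)) * q ^ (Suc N - Suc m)) * (qpoch_recip q (int (Suc m) + int B)
      * qpoch_recip q (int (Suc N) - int (Suc m)) * qpoch_recip q (int (Suc m) - 1))"
    by (simp only: mult_ac)
  also have "\<dots> = q ^ (N + B + 1) * q ^ (m * (m + Suc B)) * (qpoch_recip q (int m + int (Suc B))
      * qpoch_recip q (int N - int m) * qpoch_recip q (int m))"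
    unfolding pow e ..
  finally show "q ^ (Suc m * (Suc m + B)) * qpoch_recip q (int (Suc m) + int B)
      * (q ^ (Suc N - Suc m) * qpoch_recip q (int (Suc N) - int (Suc m)) * qpoch_recip q (int (Suc m) - 1))
    = q ^ (N + B + 1) * (q ^ (m * (m + Suc B)) * qpoch_recip q (int N - int m) * qpoch_recip q (int m)
      * qpoch_recip q (int m + int (Suc B)))"
    by (simp only: mult_ac)
qed

lemma q_vandermonde_rec:
  assumes q: "norm q < 1"
  shows "(1 - q ^ Suc N) * (\<Sum>m\<le>Suc N. q ^ (m * (m + B)) * qpoch_recip q (int (Suc N) - int m)
           * qpoch_recip q (int m) * qpoch_recip q (int m + int B))
       = (\<Sum>m\<le>N. q ^ (m * (m + B)) * qpoch_recip q (int N - int m) * qpoch_recip q (int m)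
           * qpoch_recip q (int m + int B))
         + q ^ (N + B + 1) * (\<Sum>m\<le>N. q ^ (m * (m + Suc B)) * qpoch_recip q (int N - int m)
           * qpoch_recip q (int m) * qpoch_recip q (int m + int (Suc B)))"
proof -
  have "(1 - q ^ Suc N) * (\<Sum>m\<le>Suc N. q ^ (m * (m + B)) * qpoch_recip q (int (Suc N) - int m)
           * qpoch_recip q (int m) * qpoch_recip q (int m + int B))
      = (\<Sum>m\<le>Suc N. q ^ (m * (m + B)) * qpoch_recip q (int m + int B)
          * ((1 - q ^ Suc N) * qpoch_recip q (int (Suc N) - int m) * qpoch_recip q (int m)))"
    unfolding sum_distrib_left by (rule sum.cong[OF refl]) (simp only: mult_ac)
  also have "\<dots> = (\<Sum>m\<le>Suc N. q ^ (m * (m + B)) * qpoch_recip q (int m + int B)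
          * (qpoch_recip q (int N - int m) * qpoch_recip q (int m)))
      + (\<Sum>m\<le>Suc N. q ^ (m * (m + B)) * qpoch_recip q (int m + int B)
          * (q ^ (Suc N - m) * qpoch_recip q (int (Suc N) - int m) * qpoch_recip q (int m - 1)))"
    unfolding sum.distrib[symmetric]
    by (rule sum.cong[OF refl]) (simp only: qpoch_recip_pascal_reflected[OF q] distrib_left atMost_iff)
  also have "(\<Sum>m\<le>Suc N. q ^ (m * (m + B)) * qpoch_recip q (int m + int B)
          * (qpoch_recip q (int N - int m) * qpoch_recip q (int m)))
      = (\<Sum>m\<le>N. q ^ (m * (m + B)) * qpoch_recip q (int N - int m) * qpoch_recip q (int m)
           * qpoch_recip q (int m + int B))"
    by (simp add: mult_ac)
  finally show ?thesis unfolding q_vandermonde_index_shift .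
qed

lemma q_vandermonde:
  assumes q: "norm q < 1"
  shows "(\<Sum>m\<le>N. q ^ (m * (m + B)) * qpoch_recip q (int N - int m) * qpoch_recip q (int m)
           * qpoch_recip q (int m + int B))
       = qpoch_recip q (int N) * qpoch_recip q (int N + int B)"
proof (induction N arbitrary: B)
  case 0
  then show ?case by simp
next
  case (Suc N)
  have "(1 - q ^ Suc N) * (\<Sum>m\<le>Suc N. q ^ (m * (m + B)) * qpoch_recip q (int (Suc N) - int m)
           * qpoch_recip q (int m) * qpoch_recip q (int m + int B))
      = qpoch_recip q (int N) * ((1 - q ^ (N + B + 1)) * qpoch_recip q (int N + int B + 1))
        + q ^ (N + B + 1) * (qpoch_recip q (int N) * qpoch_recip q (int N + int B + 1))"
    unfolding q_vandermonde_rec[OF q] Suc.IH using qpoch_recip_Suc[OF q, of "N + B"] by (simp add: add_ac)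
  also have "\<dots> = (1 - q ^ Suc N) * (qpoch_recip q (int (Suc N)) * qpoch_recip q (int (Suc N) + int B))"
    unfolding qpoch_recip_Suc[OF q, of N, symmetric] by (simp add: algebra_simps)
  finally show ?case using one_minus_power_nonzero[OF q, of "Suc N"] by simp
qed

lemma bailey_kernel_sum_nat:
  assumes q: "norm q < 1"
  shows "(\<Sum>k\<le>n. q ^ (k * (k + A)) * qpoch_recip q (int n - int k) * qpoch_recip q (int k - int j)
           * qpoch_recip q (int k + int j + int A))
       = q ^ (j * (j + A)) * qpoch_recip q (int n - int j) * qpoch_recip q (int n + int j + int A)"
proof (cases "j \<le> n")
  case False
  thus ?thesis by (simp add: sum.neutral)
next
  case True
  define N B where "N = n - j" and "B = j + j + A"
  define f where "f k = q ^ (k * (k + A)) * qpoch_recip q (int n - int k) * qpoch_recip q (int k - int j)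
    * qpoch_recip q (int k + int j + int A)" for k
  have "(\<Sum>k\<le>n. f k) = (\<Sum>k\<in>{j..n}. f k)"
    by (rule sum.mono_neutral_right) (auto simp: f_def)
  also have "\<dots> = (\<Sum>m\<le>N. f (m + j))"
    using sum.shift_bounds_cl_nat_ivl[of f 0 j N] True by (simp add: N_def atLeast0AtMost)
  also have "\<dots> = q ^ (j * (j + A)) * (\<Sum>m\<le>N. q ^ (m * (m + B)) * qpoch_recip q (int N - int m)
      * qpoch_recip q (int m) * qpoch_recip q (int m + int B))"
    unfolding sum_distrib_left
  proof (rule sum.cong[OF refl])
    fix m
    have ex: "(m + j) * (m + j + A) = j * (j + A) + m * (m + B)"
      by (simp add: B_def algebra_simps)
    have e: "int n - int (m + j) = int N - int m" "int (m + j) - int j = int m"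
      "int (m + j) + int j + int A = int m + int B" using True by (auto simp: N_def B_def)
    show "f (m + j) = q ^ (j * (j + A)) * (q ^ (m * (m + B)) * qpoch_recip q (int N - int m)
      * qpoch_recip q (int m) * qpoch_recip q (int m + int B))"
      unfolding f_def ex e power_add by (simp only: mult_ac)
  qed
  also have "\<dots> = q ^ (j * (j + A)) * qpoch_recip q (int n - int j) * qpoch_recip q (int n + int j + int A)"
  proof -
    have "int N = int n - int j" "int n - int j + int B = int n + int j + int A"
      using True by (auto simp: N_def B_def)
    thus ?thesis unfolding q_vandermonde[OF q] by (simp only: mult_ac)
  qed
  finally show ?thesis unfolding f_def .
qed

lemma bailey_kernel_sum:
  assumes q: "norm q < 1" and A: "A \<le> 1"
  shows "(\<Sum>k\<le>n. q ^ (k * (k + A)) * qpoch_recip q (int n - int k) * qpoch_recip q (int k - j)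
           * qpoch_recip q (int k + j + int A))
       = q ^ nat (j * (j + int A)) * qpoch_recip q (int n - j) * qpoch_recip q (int n + j + int A)"
proof (cases "j \<ge> 0")
  case True
  then obtain j' where j': "j = int j'" by (metis nonneg_eq_int)
  have "j * (j + int A) = int (j' * (j' + A))"
    unfolding j' by simp
  hence "nat (j * (j + int A)) = j' * (j' + A)"
    by (simp only: nat_int)
  thus ?thesis unfolding j' using bailey_kernel_sum_nat[OF q] by simp
next
  case False
  define j' where "j' = nat (- j - int A)"
  have j': "j = - int j' - int A" using False A unfolding j'_def by auto
  have "j * (j + int A) = int (j' * (j' + A))"
    unfolding j' by (simp add: algebra_simps)
  hence w: "nat (j * (j + int A)) = j' * (j' + A)"
    by (simp only: nat_int)
  have e: "int k - j = int k + int j' + int A" "int k + j + int A = int k - int j'" for k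
    unfolding j' by auto
  show ?thesis unfolding w e
    using bailey_kernel_sum_nat[OF q, where n = n and A = A and j = j'] by (simp only: mult_ac)
qed

theorem bailey_lemma:
  assumes q: "norm q < 1" and A: "A \<le> 1" and pair: "bailey_pair q A \<alpha> \<beta>"
  shows "bailey_pair q A (\<lambda>j. q ^ nat (j * (j + int A)) * \<alpha> j)
           (\<lambda>n. \<Sum>k\<le>n. q ^ (k * (k + A)) * qpoch_recip q (int n - int k) * \<beta> k)"
  unfolding bailey_pair_def
proof
  fix n
  let ?J = "{- int n - int A..int n}"
  have \<beta>: "\<beta> k = (\<Sum>j\<in>?J. \<alpha> j * qpoch_recip q (int k - j) * qpoch_recip q (int k + j + int A))"
    if "k \<le> n" for k
  proof -
    have "\<beta> k = (\<Sum>j\<in>{- int k - int A..int k}. \<alpha> j * qpoch_recip q (int k - j) * qpoch_recip q (int k + j + int A))"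
      using pair unfolding bailey_pair_def by blast
    also have "\<dots> = (\<Sum>j\<in>?J. \<alpha> j * qpoch_recip q (int k - j) * qpoch_recip q (int k + j + int A))"
      by (rule sum.mono_neutral_left) (use that in auto)
    finally show ?thesis .
  qed
  have "(\<Sum>k\<le>n. q ^ (k * (k + A)) * qpoch_recip q (int n - int k) * \<beta> k)
      = (\<Sum>k\<le>n. \<Sum>j\<in>?J. \<alpha> j * (q ^ (k * (k + A)) * qpoch_recip q (int n - int k)
          * qpoch_recip q (int k - j) * qpoch_recip q (int k + j + int A)))"
    by (rule sum.cong[OF refl]) (simp add: \<beta> sum_distrib_left mult_ac)
  also have "\<dots> = (\<Sum>j\<in>?J. \<alpha> j * (\<Sum>k\<le>n. q ^ (k * (k + A)) * qpoch_recip q (int n - int k)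
          * qpoch_recip q (int k - j) * qpoch_recip q (int k + j + int A)))"
    unfolding sum_distrib_left by (rule sum.swap)
  also have "\<dots> = (\<Sum>j\<in>?J. \<alpha> j * (q ^ nat (j * (j + int A)) * qpoch_recip q (int n - j)
          * qpoch_recip q (int n + j + int A)))"
    by (simp only: bailey_kernel_sum[OF q A])
  finally show "(\<Sum>k\<le>n. q ^ (k * (k + A)) * qpoch_recip q (int n - int k) * \<beta> k)
      = (\<Sum>j\<in>?J. q ^ nat (j * (j + int A)) * \<alpha> j * qpoch_recip q (int n - j) * qpoch_recip q (int n + j + int A))"
    by (simp only: mult_ac)
qed

lemma finite_rogers_ramanujan:
  assumes q: "norm q < 1" and A: "A \<le> 1"
  shows "(\<Sum>k\<le>n. q ^ (k * (k + A)) * qpoch_recip q (int n - int k) * qpoch_recip q (int k))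
       = (\<Sum>j\<in>{- int n - int A..int n}. q ^ nat (j * (j + int A))
           * (q ^ nat (j * (j + int A)) * ((-1) ^ nat \<bar>j\<bar> * q ^ binom2 j))
           * qpoch_recip q (int n - j) * qpoch_recip q (int n + j + int A))"
proof -
  have delta: "(\<Sum>k\<le>n. c k * (if k = 0 then 1 else 0)) = c 0" for c :: "nat \<Rightarrow> complex" and n
    by (induction n) auto
  have "bailey_pair q A (\<lambda>j. q ^ nat (j * (j + int A)) * ((-1) ^ nat \<bar>j\<bar> * q ^ binom2 j))
      (\<lambda>n. qpoch_recip q (int n))"
    using bailey_lemma[OF q A bailey_pair_unit[OF q]] by (simp add: delta)
  from bailey_lemma[OF q A this] show ?thesis
    unfolding bailey_pair_def by blast
qed

lemma sum_int_interval_split: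
  fixes F :: "int \<Rightarrow> 'a :: ab_group_add"
  shows "(\<Sum>j\<in>{- int N..int M}. F j) = (\<Sum>k\<le>M. F (int k)) + (\<Sum>k\<le>N. F (- int k)) - F 0"
proof -
  have "{0..int M} \<union> {- int N..0} = {- int N..int M}" "{0..int M} \<inter> {- int N..0} = {0}" by auto
  hence "(\<Sum>j\<in>{- int N..int M}. F j) + F 0 = (\<Sum>j\<in>{0..int M}. F j) + (\<Sum>j\<in>{- int N..0}. F j)"
    using sum.union_inter[of "{0..int M}" "{- int N..0}" F] by simp
  moreover have "(\<Sum>j\<in>{0..int M}. F j) = (\<Sum>k\<le>M. F (int k))"
    by (rule sum.reindex_bij_witness[where i = int and j = nat]) auto
  moreover have "(\<Sum>j\<in>{- int N..0}. F j) = (\<Sum>k\<le>N. F (- int k))"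
    by (rule sum.reindex_bij_witness[where i = "\<lambda>k. - int k" and j = "\<lambda>j. nat (- j)"]) auto
  ultimately show ?thesis by (simp add: eq_diff_eq)
qed

lemma finite_rogers_ramanujan_theta_form:
  assumes q: "norm q < 1" and A: "A \<le> 1"
  shows "(\<Sum>k\<le>n. q ^ (k * (k + A)) * qpoch_recip q (int n - int k) * qpoch_recip q (int k))
       = (\<Sum>k\<le>n. (-1) ^ k * (q ^ 5) ^ binom2 (int k) * (q ^ (2 + 2 * A)) ^ k
            * (qpoch_recip q (int n - int k) * qpoch_recip q (int n + int k + int A)))
       + (\<Sum>k\<le>n + A. (-1) ^ k * (q ^ 5) ^ binom2 (int k) * (q ^ (3 - 2 * A)) ^ k
            * (qpoch_recip q (int n + int k) * qpoch_recip q (int n - int k + int A)))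
       - qpoch_recip q (int n) * qpoch_recip q (int n + int A)"
proof -
  define c where "c j = q ^ nat (j * (j + int A)) * (q ^ nat (j * (j + int A)) * ((-1) ^ nat \<bar>j\<bar> * q ^ binom2 j))"
    for j
  have A01: "A = 0 \<or> A = 1" using A by auto
  have pos: "c (int k) = (-1) ^ k * (q ^ 5) ^ binom2 (int k) * (q ^ (2 + 2 * A)) ^ k" for k
  proof -
    have "nat (int k * (int k + int A)) = k * (k + A)"
      by (metis nat_int of_nat_add of_nat_mult)
    hence "c (int k) = (-1) ^ k * q ^ (k * (k + A) + (k * (k + A) + binom2 (int k)))"
      unfolding c_def by (simp add: power_add mult_ac)
    also have "k * (k + A) + (k * (k + A) + binom2 (int k)) = 5 * binom2 (int k) + (2 + 2 * A) * k"
      using two_binom2[of k] by (simp add: algebra_simps)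
    finally show ?thesis by (simp only: power_add power_mult mult.assoc)
  qed
  have neg: "c (- int k) = (-1) ^ k * (q ^ 5) ^ binom2 (int k) * (q ^ (3 - 2 * A)) ^ k" for k
  proof -
    have "- int k * (- int k + int A) = int (k * (k - A))"
      using A01 by (cases k) (auto simp: algebra_simps)
    hence "nat (- int k * (- int k + int A)) = k * (k - A)"
      by (simp only: nat_int)
    hence "c (- int k) = (-1) ^ k * q ^ (k * (k - A) + (k * (k - A) + (binom2 (int k) + k)))"
      unfolding c_def binom2_uminus by (simp add: power_add mult_ac)
    also have "k * (k - A) + (k * (k - A) + (binom2 (int k) + k)) = 5 * binom2 (int k) + (3 - 2 * A) * k"
      using A01 two_binom2[of k] by (cases k) (auto simp: algebra_simps)
    finally show ?thesis by (simp only: power_add power_mult mult.assoc)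
  qed
  have "c 0 = 1" by (simp add: c_def binom2_def)
  moreover have "{- int n - int A..int n} = {- int (n + A)..int n}" by simp
  ultimately show ?thesis
    unfolding finite_rogers_ramanujan[OF q A] c_def[symmetric] sum_int_interval_split
    by (simp only: sum_int_interval_split) (simp add: pos neg mult_ac)
qed

lemma summable_norm_rogers_ramanujan:
  assumes q: "norm q < 1"
  shows "summable (\<lambda>k. norm (q ^ (k * (k + A)) * qpoch_recip q (int k)))"
proof -
  obtain K where K: "\<And>m. norm (qpoch_recip q m) \<le> K" using qpoch_recip_bounded[OF q] by blast
  have "norm q ^ (k * (k + A)) \<le> norm q ^ k" for k
    using q by (intro power_decreasing) (auto simp: le_Suc_ex)
  hence bound: "norm (norm (q ^ (k * (k + A)) * qpoch_recip q (int k))) \<le> norm q ^ k * K" for k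
    using K[of "int k"] by (simp add: norm_mult norm_power mult_mono)
  have "summable (\<lambda>k. norm q ^ k * K)"
    using q by (intro summable_mult2 summable_geometric) simp
  thus ?thesis by (rule summable_comparison_test') (rule bound)
qed

lemma rogers_ramanujan_triple_product_form:
  assumes q: "norm q < 1" and q0: "q \<noteq> 0" and A: "A \<le> 1"
  shows "((\<lambda>k. q ^ (k * (k + A)) * qpoch_recip q (int k)) has_sum
      qpoch_inf (q ^ (2 + 2 * A)) (q ^ 5) * qpoch_inf (q ^ (3 - 2 * A)) (q ^ 5) * qpoch_inf (q ^ 5) (q ^ 5)
        / qpoch_inf q q) UNIV"
proof (rule has_sum_of_qpoch_recip_convolution[OF q summable_norm_rogers_ramanujan[OF q]])
  define p u v where "p = q ^ 5" and "u = q ^ (2 + 2 * A)" and "v = q ^ (3 - 2 * A)"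
  have p: "norm p < 1" using q by (simp add: p_def norm_power power_less_one_iff)
  have u: "u \<noteq> 0" using q0 by (simp add: u_def)
  have "(2 + 2 * A) + (3 - 2 * A) = 5" using A by simp
  hence uv: "u * v = p" unfolding u_def v_def p_def by (metis power_add)
  define L where "L = 1 / qpoch_inf q q"
  obtain K where K: "\<And>m. norm (qpoch_recip q m) \<le> K" using qpoch_recip_bounded[OF q] by blast
  define g h where "g n k = qpoch_recip q (int n - int k) * qpoch_recip q (int n + int k + int A)"
    and "h n k = qpoch_recip q (int n + int k) * qpoch_recip q (int n - int k + int A)" for n k
  have gh: "norm (g n k) \<le> K * K" "norm (h n k) \<le> K * K" for n k
    unfolding g_def h_def norm_mult by (intro mult_mono K; use K[of 0] in simp)+
  have gh_lim: "(\<lambda>n. g n k) \<longlonglongrightarrow> L * L" "(\<lambda>n. h n k) \<longlonglongrightarrow> L * L" for k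
    using qpoch_recip_mult_tendsto[OF q, of "- int k" "int k + int A"]
      qpoch_recip_mult_tendsto[OF q, of "int k" "int A - int k"]
    by (simp_all add: g_def h_def L_def algebra_simps)
  have "(\<Sum>k. q ^ (k * (k + A)) * qpoch_recip q (int k) * qpoch_recip q (int n - int k))
      = (\<Sum>k. (-1) ^ k * p ^ binom2 (int k) * u ^ k * g n k) + (\<Sum>k. (-1) ^ k * p ^ binom2 (int k) * v ^ k * h n k)
        - g n 0" for n
  proof -
    have "(\<Sum>k. q ^ (k * (k + A)) * qpoch_recip q (int k) * qpoch_recip q (int n - int k))
        = (\<Sum>k\<le>n. q ^ (k * (k + A)) * qpoch_recip q (int k) * qpoch_recip q (int n - int k))"
      by (rule suminf_finite) auto
    moreover have "(\<Sum>k. (-1) ^ k * p ^ binom2 (int k) * u ^ k * g n k) = (\<Sum>k\<le>n. (-1) ^ k * p ^ binom2 (int k) * u ^ k * g n k)"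
      by (rule suminf_finite) (auto simp: g_def)
    moreover have "(\<Sum>k. (-1) ^ k * p ^ binom2 (int k) * v ^ k * h n k) = (\<Sum>k\<le>n + A. (-1) ^ k * p ^ binom2 (int k) * v ^ k * h n k)"
      by (rule suminf_finite) (auto simp: h_def)
    ultimately show ?thesis
      using finite_rogers_ramanujan_theta_form[OF q A, of n]
      by (simp add: g_def h_def p_def u_def v_def mult_ac)
  qed
  moreover have "(\<lambda>n. (\<Sum>k. (-1) ^ k * p ^ binom2 (int k) * u ^ k * g n k)
      + (\<Sum>k. (-1) ^ k * p ^ binom2 (int k) * v ^ k * h n k) - g n 0)
      \<longlonglongrightarrow> qpoch_inf u p * qpoch_inf v p * qpoch_inf p p * (L * L)"
    using tendsto_theta_sums[OF p, where u = u and v = v and g = g and h = h and r = "\<lambda>n. g n 0",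
        OF gh gh_lim gh_lim(1)]
    unfolding jacobi_triple_product[OF p u uv] .
  ultimately show "(\<lambda>n. \<Sum>k. q ^ (k * (k + A)) * qpoch_recip q (int k) * qpoch_recip q (int n - int k))
      \<longlonglongrightarrow> qpoch_inf (q ^ (2 + 2 * A)) (q ^ 5) * qpoch_inf (q ^ (3 - 2 * A)) (q ^ 5) * qpoch_inf (q ^ 5) (q ^ 5)
        / qpoch_inf q q / qpoch_inf q q"
    by (simp add: p_def u_def v_def L_def)
qed

theorem rogers_ramanujan:
  assumes q: "norm q < 1" and A: "A \<le> 1"
  shows "((\<lambda>k. q ^ (k * (k + A)) * qpoch_recip q (int k)) has_sum
      1 / (qpoch_inf (q ^ (1 + A)) (q ^ 5) * qpoch_inf (q ^ (4 - A)) (q ^ 5))) UNIV"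
proof (cases "q = 0")
  case True
  have "q ^ (1 + A) = 0" "q ^ (4 - A) = 0" "q ^ 5 = 0" using True A by simp_all
  moreover have "qpoch_inf 0 0 = 1" by (simp add: qpoch_inf_def)
  ultimately show ?thesis using True
    by (simp only:) (intro has_sum_finite_neutralI[where B = "{0}"]; simp)
next
  case False
  have nz: "qpoch_inf (q ^ c) (q ^ 5) \<noteq> 0" if "c > 0" for c
    using q that by (intro qpoch_inf_nonzero) (simp_all add: norm_power power_less_one_iff)
  have dissection: "qpoch_inf q q = qpoch_inf q (q ^ 5) * qpoch_inf (q ^ 2) (q ^ 5) * qpoch_inf (q ^ 3) (q ^ 5)
      * qpoch_inf (q ^ 4) (q ^ 5) * qpoch_inf (q ^ 5) (q ^ 5)"
    using qpoch_inf_dissection[OF q, of 5 q] by (simp add: numeral_eq_Suc mult_ac)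
  have "qpoch_inf (q ^ (2 + 2 * A)) (q ^ 5) * qpoch_inf (q ^ (3 - 2 * A)) (q ^ 5)
      * qpoch_inf (q ^ 5) (q ^ 5) / qpoch_inf q q = 1 / (qpoch_inf (q ^ (1 + A)) (q ^ 5) * qpoch_inf (q ^ (4 - A)) (q ^ 5))"
  proof (cases "A = 0")
    case True
    hence e: "2 + 2 * A = 2" "3 - 2 * A = 3" "1 + A = 1" "4 - A = 4" by simp_all
    show ?thesis unfolding e dissection power_one_right
      using nz[of 1] nz[of 2] nz[of 3] nz[of 4] nz[of 5] by (simp add: field_simps)
  next
    case False
    hence e: "2 + 2 * A = 4" "3 - 2 * A = 1" "1 + A = 2" "4 - A = 3" using A by simp_all
    show ?thesis unfolding e dissection power_one_right
      using nz[of 1] nz[of 2] nz[of 3] nz[of 4] nz[of 5] by (simp add: field_simps)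
  qed
  thus ?thesis using rogers_ramanujan_triple_product_form[OF q False A] by simp
qed

section \<open>The triple sums\<close>

lemma summable_on_times_nonneg:
  fixes f :: "'a \<Rightarrow> real" and g :: "'b \<Rightarrow> real"
  assumes f: "f summable_on A" and g: "g summable_on B"
    and f0: "\<And>x. x \<in> A \<Longrightarrow> f x \<ge> 0" and g0: "\<And>y. y \<in> B \<Longrightarrow> g y \<ge> 0"
  shows "(\<lambda>(x, y). f x * g y) summable_on A \<times> B"
proof -
  have "((\<lambda>y. f x * g y) has_sum f x * infsum g B) B" for x
    using g by (intro has_sum_cmult_right has_sum_infsum)
  moreover have "(\<lambda>x. f x * infsum g B) summable_on A"
    using f by (rule summable_on_cmult_left)
  ultimately show ?thesis
    using f0 g0 by (intro summable_on_SigmaI[where g = "\<lambda>x. f x * infsum g B"]) auto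
qed

lemma tsum_term_eq:
  "tsum_term r e (i, j, k)
     = r ^ e i j k * qpoch_recip (r ^ 2) (int i) * qpoch_recip (r ^ 2) (int j) * qpoch_recip (r ^ 2) (int k)"
  by (simp add: tsum_term_def qpoch_recip_of_nat)

lemma tsum_term_summable:
  assumes r: "norm r < 1" and e: "\<And>i j k. i + j + (k - 1) \<le> e i j k"
  shows "tsum_term r e summable_on UNIV"
proof -
  obtain K where K: "\<And>m. norm (qpoch_recip (r ^ 2) m) \<le> K"
    using qpoch_recip_bounded[of "r ^ 2"] r by (auto simp: norm_power power_less_one_iff)
  have K0: "K \<ge> 0" using order.trans[OF norm_ge_zero K] .
  define \<rho> where "\<rho> = norm r"
  have \<rho>: "0 \<le> \<rho>" "\<rho> < 1" using r by (auto simp: \<rho>_def)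
  have geom: "(\<lambda>k. K * \<rho> ^ k) summable_on UNIV" "(\<lambda>k. K * \<rho> ^ (k - 1)) summable_on UNIV"
  proof -
    have "summable (\<lambda>k. K * \<rho> ^ k)" using \<rho> by (intro summable_mult summable_geometric) simp
    moreover from this have "summable (\<lambda>k. K * \<rho> ^ (k - 1))"
      by (subst summable_Suc_iff[symmetric]) simp
    ultimately show "(\<lambda>k. K * \<rho> ^ k) summable_on UNIV" "(\<lambda>k. K * \<rho> ^ (k - 1)) summable_on UNIV"
      using \<rho> K0 by (simp_all add: summable_on_UNIV_nonneg_real_iff)
  qed
  have "(\<lambda>(j, k). K * \<rho> ^ j * (K * \<rho> ^ (k - 1))) summable_on UNIV"
    using summable_on_times_nonneg[OF geom] \<rho> K0 by simp
  moreover have "0 \<le> (case jk of (j, k) \<Rightarrow> K * \<rho> ^ j * (K * \<rho> ^ (k - 1)))" for jk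
    using \<rho> K0 by (cases jk) simp
  ultimately have "(\<lambda>(i, jk). K * \<rho> ^ i * (case jk of (j, k) \<Rightarrow> K * \<rho> ^ j * (K * \<rho> ^ (k - 1))))
      summable_on UNIV \<times> UNIV"
    using \<rho> K0 by (intro summable_on_times_nonneg[OF geom(1)]) simp_all
  hence "(\<lambda>(i, jk). K * \<rho> ^ i * (case jk of (j, k) \<Rightarrow> K * \<rho> ^ j * (K * \<rho> ^ (k - 1))))
      summable_on UNIV"
    by simp
  hence "(\<lambda>x. norm (tsum_term r e x)) summable_on UNIV"
  proof (rule Infinite_Sum.abs_summable_on_comparison_test')
    fix x :: "nat \<times> nat \<times> nat"
    obtain i j k where x: "x = (i, j, k)" by (cases x) auto
    have "\<rho> ^ e i j k \<le> \<rho> ^ i * \<rho> ^ j * \<rho> ^ (k - 1)"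
      using power_decreasing[OF e \<rho>(1) less_imp_le[OF \<rho>(2)]] by (simp add: power_add)
    moreover have "norm (qpoch_recip (r ^ 2) (int i)) * norm (qpoch_recip (r ^ 2) (int j))
        * norm (qpoch_recip (r ^ 2) (int k)) \<le> K * K * K"
      by (intro mult_mono K) (auto simp: K0)
    ultimately have "\<rho> ^ e i j k * (norm (qpoch_recip (r ^ 2) (int i)) * norm (qpoch_recip (r ^ 2) (int j))
        * norm (qpoch_recip (r ^ 2) (int k))) \<le> (\<rho> ^ i * \<rho> ^ j * \<rho> ^ (k - 1)) * (K * K * K)"
      by (rule mult_mono) (use \<rho> in auto)
    thus "norm (tsum_term r e x)
        \<le> (case x of (i, jk) \<Rightarrow> K * \<rho> ^ i * (case jk of (j, k) \<Rightarrow> K * \<rho> ^ j * (K * \<rho> ^ (k - 1))))"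
      unfolding x tsum_term_eq by (simp add: norm_mult norm_power \<rho>_def[symmetric] mult_ac)
  qed
  thus ?thesis by (rule abs_summable_summable)
qed

lemma tsum_term_has_sum_over_k:
  assumes r: "norm r < 1" and i: "i \<le> n"
    and e: "\<And>i j k. e i j k = 2 * ((i + j) * (i + j + A)) + 2 * (i + j) * k
                              + 2 * binom2 (int i) + 2 * binom2 (int k) + s * (i + k)"
  shows "((\<lambda>k. tsum_term r e (i, n - i, k)) has_sum
           (r ^ 2) ^ (n * (n + A)) * ((r ^ 2) ^ binom2 (int i) * (r ^ s) ^ i * qpoch_recip (r ^ 2) (int i)
             * qpoch_recip (r ^ 2) (int n - int i)) * qpoch_inf (- (r ^ s * (r ^ 2) ^ n)) (r ^ 2)) UNIV"
proof -
  define q y where "q = r ^ 2" and "y = r ^ s"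
  have q: "norm q < 1" using r by (simp add: q_def norm_power power_less_one_iff)
  have "tsum_term r e (i, n - i, k) = q ^ (n * (n + A)) * (q ^ binom2 (int i) * y ^ i * qpoch_recip q (int i)
      * qpoch_recip q (int n - int i)) * (q ^ binom2 (int k) * (y * q ^ n) ^ k * qpoch_recip q (int k))" for k
  proof -
    have "e i (n - i) k = 2 * (n * (n + A) + binom2 (int i) + binom2 (int k) + n * k) + s * i + s * k"
      unfolding e using i by (simp add: algebra_simps)
    hence "r ^ e i (n - i) k = q ^ (n * (n + A)) * q ^ binom2 (int i) * y ^ i * (q ^ binom2 (int k) * (y * q ^ n) ^ k)"
      unfolding q_def y_def by (simp only: power_add power_mult power_mult_distrib) (simp only: mult_ac)
    thus ?thesis using i by (simp add: tsum_term_eq q_def of_nat_diff mult_ac)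
  qed
  thus ?thesis unfolding q_def[symmetric] y_def[symmetric]
    using has_sum_cmult_right[OF euler_has_sum[OF q, of "y * q ^ n"]] by simp
qed

lemma triple_sum_has_sum:
  assumes r: "norm r < 1"
    and e: "\<And>i j k. e i j k = 2 * ((i + j) * (i + j + A)) + 2 * (i + j) * k
                              + 2 * binom2 (int i) + 2 * binom2 (int k) + s * (i + k)"
    and R: "((\<lambda>n. (r ^ 2) ^ (n * (n + A)) * qpoch_recip (r ^ 2) (int n)) has_sum R) UNIV"
  shows "(tsum_term r e has_sum qpoch_inf (- (r ^ s)) (r ^ 2) * R) UNIV"
proof -
  define q y where "q = r ^ 2" and "y = r ^ s"
  have q: "norm q < 1" using r by (simp add: q_def norm_power power_less_one_iff)
  let ?I = "Sigma UNIV atMost :: (nat \<times> nat) set"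
  define F where "F x = tsum_term r e (snd (fst x), fst (fst x) - snd (fst x), snd x)" for x :: "(nat \<times> nat) \<times> nat"
  define G where "G x = q ^ (fst x * (fst x + A)) * (q ^ binom2 (int (snd x)) * y ^ snd x
    * qpoch_recip q (int (snd x)) * qpoch_recip q (int (fst x) - int (snd x))) * qpoch_inf (- (y * q ^ fst x)) q"
    for x :: "nat \<times> nat"
  have reindex: "(tsum_term r e has_sum S) UNIV \<longleftrightarrow> (F has_sum S) (Sigma ?I (\<lambda>_. UNIV))" for S
    by (rule has_sum_reindex_bij_witness[where j = "\<lambda>(i, j, k). ((i + j, i), k)" and i = "\<lambda>((n, i), k). (i, n - i, k)"])
       (auto simp: F_def)
  have "tsum_term r e summable_on UNIV"
  proof (rule tsum_term_summable[OF r])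
    fix i j k
    have "i + j \<le> 2 * ((i + j) * (i + j + A))" "k - 1 \<le> 2 * binom2 (int k)"
      using two_binom2[of k] by (cases "i + j", simp_all) (cases k, simp_all)
    thus "i + j + (k - 1) \<le> e i j k" unfolding e by linarith
  qed
  hence F: "F summable_on Sigma ?I (\<lambda>_. UNIV)"
    using reindex unfolding summable_on_def by blast
  have F_inner: "((\<lambda>k. F ((n, i), k)) has_sum G (n, i)) UNIV" if "i \<le> n" for n i
    using tsum_term_has_sum_over_k[OF r that e] by (simp add: F_def G_def q_def y_def)
  have G: "G summable_on ?I"
  proof -
    have eq: "infsum (\<lambda>k. F (x, k)) UNIV = G x" if "x \<in> ?I" for x
      using F_inner that by (auto intro: infsumI)
    have "(\<lambda>x. infsum (\<lambda>k. F (x, k)) UNIV) summable_on ?I"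
      using F_inner by (intro summable_on_SigmaD[OF F]) (auto simp: summable_on_def)
    with summable_on_cong[OF eq] show ?thesis by (rule iffD1)
  qed
  have G_inner: "((\<lambda>i. G (n, i)) has_sum q ^ (n * (n + A)) * qpoch_recip q (int n) * qpoch_inf (- y) q) {..n}" for n
  proof -
    have "(\<Sum>i\<le>n. G (n, i)) = q ^ (n * (n + A)) * (qpoch (- y) q n * qpoch_recip q (int n))
        * qpoch_inf (- (y * q ^ n)) q"
      unfolding G_def qbinomial[OF q, symmetric] by (simp add: sum_distrib_left sum_distrib_right)
    also have "\<dots> = q ^ (n * (n + A)) * qpoch_recip q (int n) * qpoch_inf (- y) q"
      using qpoch_inf_split[OF q, of "- y" n] by (simp add: mult_ac)
    finally show ?thesis using has_sum_finite[where F = "{..n}" and f = "\<lambda>i. G (n, i)"] by simp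
  qed
  have "((\<lambda>n. q ^ (n * (n + A)) * qpoch_recip q (int n) * qpoch_inf (- y) q) has_sum R * qpoch_inf (- y) q) UNIV"
    using has_sum_cmult_left[OF R] unfolding q_def .
  hence "(G has_sum R * qpoch_inf (- y) q) ?I"
    by (rule has_sum_SigmaI[OF G_inner _ G])
  moreover have "((\<lambda>k. F (x, k)) has_sum G x) UNIV" if "x \<in> ?I" for x
    using F_inner that by auto
  ultimately have "(F has_sum R * qpoch_inf (- y) q) (Sigma ?I (\<lambda>_. UNIV))"
    by (intro has_sum_SigmaI[OF _ _ F])
  thus ?thesis unfolding reindex[symmetric] q_def y_def by (simp add: mult.commute)
qed

lemma triple_sum_rogers_ramanujan:
  assumes r: "norm r < 1" and A: "A \<le> 1"
    and e: "\<And>i j k. e i j k = 2 * ((i + j) * (i + j + A)) + 2 * (i + j) * k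
                              + 2 * binom2 (int i) + 2 * binom2 (int k) + s * (i + k)"
  shows "(tsum_term r e has_sum qpoch_inf (- (r ^ s)) (r ^ 2)
           / (qpoch_inf ((r ^ 2) ^ (1 + A)) ((r ^ 2) ^ 5) * qpoch_inf ((r ^ 2) ^ (4 - A)) ((r ^ 2) ^ 5))) UNIV"
proof -
  have "norm (r ^ 2) < 1" using r by (simp add: norm_power power_less_one_iff)
  from triple_sum_has_sum[OF r e rogers_ramanujan[OF this A]] show ?thesis by simp
qed

theorem theorem4p6:
  fixes r :: complex
  assumes "norm r < 1"
  defines "q \<equiv> r ^ 2"
  defines "Q \<equiv> (\<lambda>i j k::nat. 3*i^2 + 2*j^2 + k^2 + 4*i*j + 2*i*k + 2*j*k)"
  shows "((tsum_term r (\<lambda>i j k. Q i j k) has_sum qpoch_inf (- r) q / (qpoch_inf q (q^5) * qpoch_inf (q^4) (q^5))) UNIV)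
   \<and> ((tsum_term r (\<lambda>i j k. Q i j k + i + k) has_sum qpoch_inf (- q) q / (qpoch_inf q (q^5) * qpoch_inf (q^4) (q^5))) UNIV)
   \<and> ((tsum_term r (\<lambda>i j k. Q i j k - i - k) has_sum 2 * qpoch_inf (- q) q / (qpoch_inf q (q^5) * qpoch_inf (q^4) (q^5))) UNIV)
   \<and> ((tsum_term r (\<lambda>i j k. Q i j k + 2*i + 2*j) has_sum qpoch_inf (- r) q / (qpoch_inf (q^2) (q^5) * qpoch_inf (q^3) (q^5))) UNIV)
   \<and> ((tsum_term r (\<lambda>i j k. Q i j k + 3*i + 2*j + k) has_sum qpoch_inf (- q) q / (qpoch_inf (q^2) (q^5) * qpoch_inf (q^3) (q^5))) UNIV)
   \<and> ((tsum_term r (\<lambda>i j k. Q i j k + i + 2*j - k) has_sum 2 * qpoch_inf (- q) q / (qpoch_inf (q^2) (q^5) * qpoch_inf (q^3) (q^5))) UNIV)"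
proof -
  have r: "norm r < 1" by fact
  note RR = triple_sum_rogers_ramanujan[OF r, folded q_def]
  have Q: "Q i j k = 2 * ((i + j) * (i + j)) + 2 * (i + j) * k + 2 * binom2 (int i) + 2 * binom2 (int k) + i + k"
    for i j k
    unfolding Q_def using two_binom2[of i] two_binom2[of k] by (simp add: power2_eq_square algebra_simps)
  have two: "qpoch_inf (- 1) q = 2 * qpoch_inf (- q) q"
    using qpoch_inf_Suc_shift[of q "- 1"] r by (simp add: q_def norm_power power_less_one_iff)
  show ?thesis
  proof (intro conjI)
    show "(tsum_term r (\<lambda>i j k. Q i j k) has_sum qpoch_inf (- r) q / (qpoch_inf q (q^5) * qpoch_inf (q^4) (q^5))) UNIV"
      using RR[of 0 "\<lambda>i j k. Q i j k" 1] by (simp add: Q)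
    show "(tsum_term r (\<lambda>i j k. Q i j k + i + k) has_sum qpoch_inf (- q) q / (qpoch_inf q (q^5) * qpoch_inf (q^4) (q^5))) UNIV"
      using RR[of 0 "\<lambda>i j k. Q i j k + i + k" 2] by (simp add: Q q_def)
    show "(tsum_term r (\<lambda>i j k. Q i j k - i - k) has_sum 2 * qpoch_inf (- q) q / (qpoch_inf q (q^5) * qpoch_inf (q^4) (q^5))) UNIV"
      using RR[of 0 "\<lambda>i j k. Q i j k - i - k" 0] by (simp add: Q two)
    show "(tsum_term r (\<lambda>i j k. Q i j k + 2*i + 2*j) has_sum qpoch_inf (- r) q / (qpoch_inf (q^2) (q^5) * qpoch_inf (q^3) (q^5))) UNIV"
      using RR[of 1 "\<lambda>i j k. Q i j k + 2*i + 2*j" 1] by (simp add: Q power2_eq_square algebra_simps)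
    show "(tsum_term r (\<lambda>i j k. Q i j k + 3*i + 2*j + k) has_sum qpoch_inf (- q) q / (qpoch_inf (q^2) (q^5) * qpoch_inf (q^3) (q^5))) UNIV"
      using RR[of 1 "\<lambda>i j k. Q i j k + 3*i + 2*j + k" 2] by (simp add: Q q_def algebra_simps)
    show "(tsum_term r (\<lambda>i j k. Q i j k + i + 2*j - k) has_sum 2 * qpoch_inf (- q) q / (qpoch_inf (q^2) (q^5) * qpoch_inf (q^3) (q^5))) UNIV"
      using RR[of 1 "\<lambda>i j k. Q i j k + i + 2*j - k" 0] by (simp add: Q two power2_eq_square algebra_simps)
  qed
qed

end
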